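(* Let $n\ge 2$, $2\le r\le n$, $\lambda\ge1$ and $1\le k\le n-1$ be integers, and let $\mathcal{B}=\{B_1,\dots,B_{N^*}\}$ be a balanced incomplete block design $S_\lambda(2,r,n)$ on $I_n=\{1,\dots,n\}$ (blocks are $r$-element subsets of $I_n$, and every 2-element subset of $I_n$ is contained in exactly $\lambda$ blocks; $N^*=\lambda n(n-1)/(r(r-1))$). For $A\subseteq I_n$ with $|A|=n-k$ put $T(A)=\sum_{B\in\mathcal{B}:\,|B\cap A|\ge 2}(|B\cap A|-1)$ and $T=\max_{A\subseteq I_n,\,|A|=n-k}T(A)$. If $q$ is a prime power with $q>\binom{n}{k}TM$, where $M=\frac{\lambda n(n-1)}{r}-T$, then there exists a linear $(n,k,d)=(n,k,n-1)$ exact-repair regenerating code over $\mathbb{F}_q$ with $$\alpha=\frac{\lambda(n-1)}{r-1},\qquad \beta=\lambda,\qquad M=\frac{\lambda n(n-1)}{r}-T,$$ which has uncoded repair: when a node fails, each of the $n-1$ remaining nodes sends exactly $\lambda$ of its stored symbols, unchanged.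
   Context: A linear $(n,k,d)$ exact-repair regenerating code over $\mathbb{F}_q$ with parameters $(\alpha,\beta,M)$ stores on each of $n$ nodes $\alpha$ symbols of $\mathbb{F}_q$, each a linear function of a message in $\mathbb{F}_q^M$, such that (i) the message can be recovered from the contents of any $k$ nodes, and (ii) for any node $j$ and any set $A$ of $d$ other nodes, each node in $A$ sends $\beta$ symbols computed from its own content, and from the $d\beta$ received symbols the exact content of node $j$ can be reconstructed. *)

theory Defs
  imports Complex_Main
begin

text \<open>Balanced incomplete block design S_lambda(2,r,n) on {1..n}; the blocks form a
  list (a family, repetitions allowed).\<close>
definition bibd :: "nat \<Rightarrow> nat \<Rightarrow> nat \<Rightarrow> nat set list \<Rightarrow> bool" where
  "bibd lam r n Bs \<longleftrightarrow>
     (\<forall>B\<in>set Bs. B \<subseteq> {1..n} \<and> card B = r) \<and>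
     (\<forall>x\<in>{1..n}. \<forall>y\<in>{1..n}. x \<noteq> y \<longrightarrow>
        length (filter (\<lambda>B. x \<in> B \<and> y \<in> B) Bs) = lam)"

definition T_of :: "nat set list \<Rightarrow> nat set \<Rightarrow> nat" where
  "T_of Bs A = sum_list (map (\<lambda>B. card (B \<inter> A) - 1) (filter (\<lambda>B. card (B \<inter> A) \<ge> 2) Bs))"

definition T_max :: "nat \<Rightarrow> nat \<Rightarrow> nat set list \<Rightarrow> nat" where
  "T_max n k Bs = Max {T_of Bs A | A. A \<subseteq> {1..n} \<and> card A = n - k}"

text \<open>Linear code: node i (in {1..n}) stores alpha symbols; symbol t of node i is the
  linear form sum_{m<M} G i t m * x m of the message x (only x 0..x (M-1) matter).\<close>
definition content :: "nat \<Rightarrow> (nat \<Rightarrow> nat \<Rightarrow> nat \<Rightarrow> 'a::field) \<Rightarrow> nat \<Rightarrow> (nat \<Rightarrow> 'a) \<Rightarrow> nat \<Rightarrow> 'a" where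
  "content M G i x t = (\<Sum>m<M. G i t m * x m)"

text \<open>(n,k,d) exact-repair linear regenerating code with parameters (alpha,beta,M):
  (i) any k nodes determine the message; (ii) for any node j and any d other nodes A,
  each node of A sends beta linear combinations of its content, and these d*beta
  symbols determine the content of node j.\<close>
definition lin_regen_code ::
  "nat \<Rightarrow> nat \<Rightarrow> nat \<Rightarrow> nat \<Rightarrow> nat \<Rightarrow> nat \<Rightarrow> (nat \<Rightarrow> nat \<Rightarrow> nat \<Rightarrow> 'a::field) \<Rightarrow> bool" where
  "lin_regen_code n k d \<alpha> \<beta> M G \<longleftrightarrow>
     (\<forall>K. K \<subseteq> {1..n} \<and> card K = k \<longrightarrow>
        (\<forall>x y. (\<forall>i\<in>K. \<forall>t<\<alpha>. content M G i x t = content M G i y t) \<longrightarrow> (\<forall>m<M. x m = y m))) \<and>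
     (\<forall>j\<in>{1..n}. \<forall>A. A \<subseteq> {1..n} - {j} \<and> card A = d \<longrightarrow>
        (\<exists>H :: nat \<Rightarrow> nat \<Rightarrow> nat \<Rightarrow> 'a.
          \<forall>x y. (\<forall>i\<in>A. \<forall>l<\<beta>. (\<Sum>t<\<alpha>. H i l t * content M G i x t) = (\<Sum>t<\<alpha>. H i l t * content M G i y t))
               \<longrightarrow> (\<forall>t<\<alpha>. content M G j x t = content M G j y t)))"

definition uncoded_repair ::
  "nat \<Rightarrow> nat \<Rightarrow> nat \<Rightarrow> nat \<Rightarrow> (nat \<Rightarrow> nat \<Rightarrow> nat \<Rightarrow> 'a::field) \<Rightarrow> bool" where
  "uncoded_repair n \<alpha> \<beta> M G \<longleftrightarrow>
     (\<forall>j\<in>{1..n}. \<exists>S :: nat \<Rightarrow> nat set.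
        (\<forall>i\<in>{1..n} - {j}. S i \<subseteq> {..<\<alpha>} \<and> card (S i) = \<beta>) \<and>
        (\<forall>x y. (\<forall>i\<in>{1..n} - {j}. \<forall>t\<in>S i. content M G i x t = content M G i y t)
               \<longrightarrow> (\<forall>t<\<alpha>. content M G j x t = content M G j y t)))"

end

theory Submission
  imports Defs "HOL-Library.FuncSet" "HOL-Library.Cardinality"
begin

text \<open>Each block \<open>B\<close> of the design carries a single parity-check code: the largest point of
  \<open>B\<close> holds the sum of the \<open>r - 1\<close> information symbols at its other points, and node \<open>i\<close> stores
  its symbol in each of the \<open>\<alpha>\<close> blocks through \<open>i\<close>. A failed node \<open>j\<close> recovers its symbol in a
  block from the other \<open>r - 1\<close> points of that block; since any other node shares exactly
  \<open>\<lambda>\<close> blocks with \<open>j\<close>, it sends \<open>\<lambda>\<close> of its stored symbols unchanged.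

  The \<open>D = \<lambda>n(n - 1)/r\<close> information symbols are the image of the message under a linear
  encoder. If the nodes outside \<open>A\<close> are known, the information vector is determined up to a
  kernel of size at most \<open>q ^ T(A)\<close>, as each block contributes \<open>|B \<inter> A| - 1\<close> free coordinates.
  The \<open>M = D - T\<close> columns of the encoder are chosen one at a time outside every set
  kernel + span of the previous columns; over a field with \<open>q\<close> elements these sets cannot
  cover all \<open>q ^ D\<close> information vectors as long as \<open>q\<close> exceeds the number \<open>n choose k\<close> of
  kernels.\<close>

section \<open>Linear combinations avoiding small scaling-closed sets\<close>

definition supported_on :: "'i set \<Rightarrow> ('i \<Rightarrow> 'a::zero) set" where
  "supported_on I = {f. \<forall>z. z \<notin> I \<longrightarrow> f z = 0}"

lemma card_supported_on:
  assumes "finite I"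
  shows "card (supported_on I :: ('i \<Rightarrow> 'a::{finite,zero}) set) = CARD('a) ^ card I"
proof -
  have "bij_betw (\<lambda>f. restrict f I) (supported_on I :: ('i \<Rightarrow> 'a) set) (I \<rightarrow>\<^sub>E UNIV)"
    by (rule bij_betw_byWitness[where f' = "\<lambda>g z. if z \<in> I then g z else 0"])
      (auto simp: supported_on_def fun_eq_iff PiE_def extensional_def)
  then show ?thesis
    by (simp add: bij_betw_same_card card_funcsetE[OF assms])
qed

lemma finite_supported_on:
  assumes "finite I"
  shows "finite (supported_on I :: ('i \<Rightarrow> 'a::{finite,zero}) set)"
  using card_supported_on[OF assms, where 'a='a] by (intro card_ge_0_finite) simp

definition lincomb :: "nat \<Rightarrow> (nat \<Rightarrow> 'a) \<Rightarrow> (nat \<Rightarrow> 'i \<Rightarrow> 'a::comm_semiring_0) \<Rightarrow> 'i \<Rightarrow> 'a" where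
  "lincomb M c w = (\<lambda>z. \<Sum>m<M. c m * w m z)"

definition plus_span ::
  "('i \<Rightarrow> 'a::comm_semiring_0) set \<Rightarrow> nat \<Rightarrow> (nat \<Rightarrow> 'i \<Rightarrow> 'a) \<Rightarrow> ('i \<Rightarrow> 'a) set" where
  "plus_span U M w = (\<lambda>(u, d). \<lambda>z. u z + lincomb M d w z) ` (U \<times> ({..<M} \<rightarrow>\<^sub>E UNIV))"

lemma finite_plus_span:
  "finite U \<Longrightarrow> finite (plus_span U M (w :: nat \<Rightarrow> 'i \<Rightarrow> 'a::{finite,comm_semiring_0}))"
  by (simp add: plus_span_def finite_PiE)

lemma card_plus_span_le:
  assumes "finite U"
  shows "card (plus_span U M (w :: nat \<Rightarrow> 'i \<Rightarrow> 'a::{finite,comm_semiring_0}))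
    \<le> card U * CARD('a) ^ M"
proof -
  have "card (plus_span U M w) \<le> card (U \<times> ({..<M} \<rightarrow>\<^sub>E (UNIV :: 'a set)))"
    unfolding plus_span_def using assms by (intro card_image_le) (simp add: finite_PiE)
  also have "\<dots> = card U * CARD('a) ^ M"
    by (simp add: card_cartesian_product card_funcsetE)
  finally show ?thesis .
qed

lemma lincomb_diff:
  fixes w :: "nat \<Rightarrow> 'i \<Rightarrow> 'a::comm_ring"
  shows "lincomb M (\<lambda>m. x m - y m) w = (\<lambda>z. lincomb M x w z - lincomb M y w z)"
  by (simp add: lincomb_def fun_eq_iff left_diff_distrib sum_subtractf)

lemma lincomb_in_supported_on:
  "(\<And>m. m < M \<Longrightarrow> w m \<in> supported_on I) \<Longrightarrow> lincomb M c w \<in> supported_on I"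
  by (simp add: lincomb_def supported_on_def)

lemma lincomb_fun_upd_Suc:
  "lincomb (Suc M) c (w(M := v)) = (\<lambda>z. lincomb M c w z + c M * v z)"
  by (simp add: lincomb_def fun_eq_iff)

lemma plus_span_if_lincomb_fun_upd_mem:
  fixes U :: "('i \<Rightarrow> 'a::field) set"
  assumes scaled: "\<And>u a. u \<in> U \<Longrightarrow> (\<lambda>z. a * u z) \<in> U"
    and mem: "lincomb (Suc M) c (w(M := v)) \<in> U" and nz: "c M \<noteq> 0"
  shows "v \<in> plus_span U M w"
proof -
  define u where "u = (\<lambda>z. inverse (c M) * lincomb (Suc M) c (w(M := v)) z)"
  define d where "d = restrict (\<lambda>m. - c m / c M) {..<M}"
  have "u \<in> U" unfolding u_def using scaled[OF mem] .
  moreover have "d \<in> {..<M} \<rightarrow>\<^sub>E UNIV" by (simp add: d_def)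
  moreover have "v = (\<lambda>z. u z + lincomb M d w z)"
  proof
    fix z
    have "lincomb M d w z = - lincomb M c w z / c M"
      by (simp add: lincomb_def d_def sum_divide_distrib flip: sum_negf)
    then show "v z = u z + lincomb M d w z"
      using nz by (simp add: u_def lincomb_fun_upd_Suc field_simps)
  qed
  ultimately show ?thesis unfolding plus_span_def by force
qed

lemma exists_lincomb_avoiding:
  fixes UU :: "('i \<Rightarrow> 'a::{finite,field}) set set"
  assumes "finite I" and "finite UU" and "card UU < CARD('a)"
    and "\<And>U. U \<in> UU \<Longrightarrow> finite U \<and> card U \<le> CARD('a) ^ T"
    and "\<And>U u a. U \<in> UU \<Longrightarrow> u \<in> U \<Longrightarrow> (\<lambda>z. a * u z) \<in> U"
    and "M + T \<le> card I"
  shows "\<exists>w. (\<forall>m<M. w m \<in> supported_on I) \<and>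
             (\<forall>U\<in>UU. \<forall>c. lincomb M c w \<in> U \<longrightarrow> (\<forall>m<M. c m = 0))"
  using \<open>M + T \<le> card I\<close>
proof (induction M)
  case 0
  then show ?case by simp
next
  case (Suc M)
  then obtain w where w_supp: "\<forall>m<M. w m \<in> supported_on I"
    and w_avoid: "\<forall>U\<in>UU. \<forall>c. lincomb M c w \<in> U \<longrightarrow> (\<forall>m<M. c m = 0)"
    by auto
  define Bad where "Bad = (\<Union>U\<in>UU. plus_span U M w)"
  have "card Bad \<le> (\<Sum>U\<in>UU. card (plus_span U M w))"
    unfolding Bad_def using \<open>finite UU\<close> by (rule card_UN_le)
  also have "\<dots> \<le> (\<Sum>U\<in>UU. CARD('a) ^ T * CARD('a) ^ M)"
  proof (rule sum_mono)
    fix U assume "U \<in> UU"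
    then show "card (plus_span U M w) \<le> CARD('a) ^ T * CARD('a) ^ M"
      using assms(4) card_plus_span_le[of U M w] by (meson le_trans mult_le_mono1)
  qed
  also have "\<dots> \<le> card UU * CARD('a) ^ (card I - 1)"
    using Suc.prems by (simp add: power_add[symmetric] power_increasing)
  also have "\<dots> < CARD('a) * CARD('a) ^ (card I - 1)"
    using assms(3) by simp
  also have "\<dots> = card (supported_on I :: ('i \<Rightarrow> 'a) set)"
    using Suc.prems by (simp add: card_supported_on[OF \<open>finite I\<close>] power_eq_if)
  finally have "card Bad < card (supported_on I :: ('i \<Rightarrow> 'a) set)" .
  moreover have "finite Bad"
    unfolding Bad_def using assms(2,4) finite_plus_span by blast
  ultimately have "\<not> supported_on I \<subseteq> Bad"
    by (meson card_mono not_le)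
  then obtain v where v_supp: "v \<in> supported_on I" and v_good: "v \<notin> Bad"
    by auto
  show ?case
  proof (intro exI[of _ "w(M := v)"] conjI allI ballI impI)
    fix m assume "m < Suc M"
    then show "(w(M := v)) m \<in> supported_on I"
      using w_supp v_supp by (auto simp: less_Suc_eq)
  next
    fix U c m assume U: "U \<in> UU" and mem: "lincomb (Suc M) c (w(M := v)) \<in> U"
      and "m < Suc M"
    have "c M = 0"
      using plus_span_if_lincomb_fun_upd_mem[of U, OF assms(5)[OF U] mem] v_good U
      by (auto simp: Bad_def)
    then have "lincomb M c w \<in> U"
      using mem by (simp add: lincomb_fun_upd_Suc)
    then show "c m = 0"
      using w_avoid U \<open>c M = 0\<close> \<open>m < Suc M\<close> by (auto simp: less_Suc_eq)
  qed
qed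

lemma two_le_card_UNIV_field: "2 \<le> CARD('a::{finite,field})"
proof -
  have "card {0::'a, 1} \<le> CARD('a)"
    by (rule card_mono) auto
  then show ?thesis
    by simp
qed

section \<open>The single parity-check code of a block\<close>

definition parity_symbol :: "nat set \<Rightarrow> nat \<Rightarrow> (nat \<Rightarrow> 'a::comm_monoid_add) \<Rightarrow> 'a" where
  "parity_symbol B i d = (if i = Max B then (\<Sum>s\<in>B - {i}. d s) else d i)"

lemma parity_symbol_diff:
  fixes d e :: "nat \<Rightarrow> 'a::ab_group_add"
  shows "parity_symbol B i (\<lambda>s. d s - e s) = parity_symbol B i d - parity_symbol B i e"
  by (simp add: parity_symbol_def sum_subtractf)

lemma parity_symbol_scale:
  fixes d :: "nat \<Rightarrow> 'a::comm_semiring_0"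
  shows "parity_symbol B i (\<lambda>s. a * d s) = a * parity_symbol B i d"
  by (simp add: parity_symbol_def sum_distrib_left)

lemma parity_symbol_lincomb:
  fixes w :: "nat \<Rightarrow> nat \<Rightarrow> 'a::comm_semiring_0"
  shows "parity_symbol B i (lincomb M c w) = (\<Sum>m<M. parity_symbol B i (w m) * c m)"
  unfolding parity_symbol_def lincomb_def
  by (auto simp: sum_distrib_left mult.commute intro: sum.swap)

lemma parity_symbol_eq_0_from_others:
  fixes d :: "nat \<Rightarrow> 'a::comm_monoid_add"
  assumes "finite B" and "j \<in> B"
    and others: "\<And>i. i \<in> B - {j} \<Longrightarrow> parity_symbol B i d = 0"
  shows "parity_symbol B j d = 0"
proof (cases "j = Max B")
  case True
  then have "parity_symbol B j d = (\<Sum>s\<in>B - {j}. parity_symbol B s d)"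
    by (auto simp: parity_symbol_def intro!: sum.cong)
  then show ?thesis
    using others by simp
next
  case False
  have "Max B \<in> B"
    using assms(1,2) by (intro Max_in) auto
  with False have "0 = parity_symbol B (Max B) d"
    using others by simp
  also have "\<dots> = d j + (\<Sum>s\<in>B - {Max B} - {j}. d s)"
    using assms(1,2) False by (simp add: parity_symbol_def sum.remove[of _ j])
  also have "(\<Sum>s\<in>B - {Max B} - {j}. d s) = 0"
  proof (intro sum.neutral ballI)
    fix s assume "s \<in> B - {Max B} - {j}"
    then show "d s = 0"
      using others[of s] by (simp add: parity_symbol_def)
  qed
  finally show ?thesis
    using False by (simp add: parity_symbol_def)
qed

lemma parity_symbol_eq_from_others:
  fixes d e :: "nat \<Rightarrow> 'a::ab_group_add"
  assumes "finite B" and "j \<in> B"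
    and "\<And>i. i \<in> B - {j} \<Longrightarrow> parity_symbol B i d = parity_symbol B i e"
  shows "parity_symbol B j d = parity_symbol B j e"
  using parity_symbol_eq_0_from_others[OF assms(1,2), of "\<lambda>s. d s - e s"] assms(3)
  by (simp add: parity_symbol_diff)

lemma parity_info_eq_0:
  fixes d :: "nat \<Rightarrow> 'a::comm_monoid_add"
  assumes "finite B" and s: "s \<in> B - {Max B}"
    and unerased: "\<And>i. i \<in> B - A \<Longrightarrow> parity_symbol B i d = 0"
    and free: "\<And>s'. s' \<in> B \<inter> A - {Max (B \<inter> A)} \<Longrightarrow> d s' = 0"
  shows "d s = 0"
proof -
  have zero: "d s' = 0" if "s' \<in> B - {Max B}" "s' \<notin> A \<or> s' \<noteq> Max (B \<inter> A)" for s'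
    using that unerased[of s'] free[of s'] by (auto simp: parity_symbol_def)
  show ?thesis
  proof (cases "s \<in> A \<and> s = Max (B \<inter> A)")
    case True
    have "Max B \<in> B"
      using assms(1) s by (intro Max_in) auto
    moreover have "Max B \<notin> A"
    proof
      assume "Max B \<in> A"
      then have "Max B \<le> s"
        using True \<open>Max B \<in> B\<close> assms(1) by auto
      moreover have "s \<le> Max B"
        using assms(1) s by simp
      ultimately show False
        using s by simp
    qed
    ultimately have "0 = parity_symbol B (Max B) d"
      using unerased by simp
    also have "\<dots> = d s + (\<Sum>s'\<in>B - {Max B} - {s}. d s')"
      using assms(1) s by (simp add: parity_symbol_def sum.remove[of _ s])
    also have "(\<Sum>s'\<in>B - {Max B} - {s}. d s') = 0"
      using zero True by (intro sum.neutral) auto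
    finally show ?thesis
      by simp
  next
    case False
    then show ?thesis
      using zero s by blast
  qed
qed

section \<open>Information vectors of a family of blocks\<close>

definition info_coords :: "nat set list \<Rightarrow> (nat \<times> nat) set" where
  "info_coords Bs = (SIGMA b:{..<length Bs}. Bs ! b - {Max (Bs ! b)})"

definition block_symbol :: "nat set list \<Rightarrow> nat \<Rightarrow> nat \<Rightarrow> (nat \<times> nat \<Rightarrow> 'a::comm_monoid_add) \<Rightarrow> 'a" where
  "block_symbol Bs b i v = parity_symbol (Bs ! b) i (\<lambda>s. v (b, s))"

text \<open>If the nodes outside \<open>A\<close> are known, the information vector is determined up to an
  element of this kernel.\<close>
definition kernel_outside :: "nat set list \<Rightarrow> nat set \<Rightarrow> (nat \<times> nat \<Rightarrow> 'a::comm_monoid_add) set" where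
  "kernel_outside Bs A = {v \<in> supported_on (info_coords Bs).
     \<forall>b<length Bs. \<forall>i\<in>Bs ! b - A. block_symbol Bs b i v = 0}"

lemma zero_in_kernel_outside: "(\<lambda>_. 0) \<in> kernel_outside Bs A"
  by (simp add: kernel_outside_def supported_on_def block_symbol_def parity_symbol_def)

lemma kernel_outside_scale:
  fixes v :: "nat \<times> nat \<Rightarrow> 'a::comm_semiring_0"
  assumes "v \<in> kernel_outside Bs A"
  shows "(\<lambda>z. a * v z) \<in> kernel_outside Bs A"
  using assms
  by (simp add: kernel_outside_def supported_on_def block_symbol_def parity_symbol_scale)

lemma kernel_outside_eqI:
  fixes u u' :: "nat \<times> nat \<Rightarrow> 'a::ab_group_add"
  assumes fin: "\<forall>B\<in>set Bs. finite B"
    and u: "u \<in> kernel_outside Bs A" and u': "u' \<in> kernel_outside Bs A"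
    and agree: "\<And>b s. b < length Bs \<Longrightarrow> s \<in> Bs ! b \<inter> A - {Max (Bs ! b \<inter> A)} \<Longrightarrow>
      u (b, s) = u' (b, s)"
  shows "u = u'"
proof
  fix z :: "nat \<times> nat"
  obtain b s where z: "z = (b, s)" by fastforce
  show "u z = u' z"
  proof (cases "z \<in> info_coords Bs")
    case True
    then have b: "b < length Bs" and s: "s \<in> Bs ! b - {Max (Bs ! b)}"
      by (auto simp: z info_coords_def)
    have "u (b, s) - u' (b, s) = 0"
    proof (rule parity_info_eq_0[OF _ s, of A "\<lambda>s. u (b, s) - u' (b, s)"])
      show "finite (Bs ! b)"
        using fin b by simp
      fix i assume "i \<in> Bs ! b - A"
      then show "parity_symbol (Bs ! b) i (\<lambda>s. u (b, s) - u' (b, s)) = 0"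
        using u u' b by (simp add: parity_symbol_diff kernel_outside_def block_symbol_def)
    qed (simp add: agree b)
    then show ?thesis
      by (simp add: z)
  next
    case False
    then show ?thesis
      using u u' by (simp add: z kernel_outside_def supported_on_def)
  qed
qed

lemma finite_info_coords: "\<forall>B\<in>set Bs. finite B \<Longrightarrow> finite (info_coords Bs)"
  by (auto simp: info_coords_def)

lemma finite_kernel_outside:
  assumes "\<forall>B\<in>set Bs. finite B"
  shows "finite (kernel_outside Bs A :: (nat \<times> nat \<Rightarrow> 'a::{finite,comm_monoid_add}) set)"
  by (rule finite_subset[OF _ finite_supported_on[OF finite_info_coords[OF assms]]])
    (auto simp: kernel_outside_def)

lemma card_Diff_Max: "finite X \<Longrightarrow> card (X - {Max X}) = card X - 1"
  by (cases "X = {}") (auto simp: card_Diff_singleton)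

lemma card_info_coords:
  "\<forall>B\<in>set Bs. finite B \<Longrightarrow> card (info_coords Bs) = (\<Sum>b<length Bs. card (Bs ! b) - 1)"
  by (simp add: info_coords_def card_SigmaI card_Diff_Max)

lemma T_of_eq_sum: "T_of Bs A = (\<Sum>b<length Bs. card (Bs ! b \<inter> A) - 1)"
proof -
  have "T_of Bs A = sum_list (map (\<lambda>B. card (B \<inter> A) - 1) Bs)"
    unfolding T_of_def sum_list_map_filter' by (rule arg_cong[where f = sum_list]) auto
  then show ?thesis
    by (simp add: sum_list_sum_nth atLeast0LessThan)
qed

lemma card_kernel_outside_le:
  assumes fin: "\<forall>B\<in>set Bs. finite B"
  shows "card (kernel_outside Bs A :: (nat \<times> nat \<Rightarrow> 'a::{finite,ab_group_add}) set)
    \<le> CARD('a) ^ T_of Bs A"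
proof -
  define J where "J = (SIGMA b:{..<length Bs}. Bs ! b \<inter> A - {Max (Bs ! b \<inter> A)})"
  define restr where "restr v = (\<lambda>z. if z \<in> J then v z else (0::'a))" for v :: "nat \<times> nat \<Rightarrow> 'a"
  have "finite J"
    unfolding J_def using fin by (intro finite_SigmaI) auto
  have "card J = T_of Bs A"
    using fin by (simp add: J_def T_of_eq_sum card_SigmaI card_Diff_Max)
  have "inj_on restr (kernel_outside Bs A)"
  proof (rule inj_onI)
    fix u u' assume "u \<in> kernel_outside Bs A" "u' \<in> kernel_outside Bs A"
      and eq: "restr u = restr u'"
    show "u = u'"
    proof (rule kernel_outside_eqI[OF fin \<open>u \<in> _\<close> \<open>u' \<in> _\<close>])
      fix b s assume "b < length Bs" "s \<in> Bs ! b \<inter> A - {Max (Bs ! b \<inter> A)}"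
      then show "u (b, s) = u' (b, s)"
        using fun_cong[OF eq, of "(b, s)"] by (simp add: restr_def J_def)
    qed
  qed
  then have "card (kernel_outside Bs A :: (nat \<times> nat \<Rightarrow> 'a) set)
      = card (restr ` kernel_outside Bs A)"
    by (simp add: card_image)
  also have "\<dots> \<le> card (supported_on J :: (nat \<times> nat \<Rightarrow> 'a) set)"
    by (intro card_mono finite_supported_on \<open>finite J\<close>) (auto simp: restr_def supported_on_def)
  finally show ?thesis
    by (simp add: card_supported_on \<open>finite J\<close> \<open>card J = T_of Bs A\<close>)
qed

lemma kernel_outside_eq_zero:
  assumes "\<forall>B\<in>set Bs. finite B" and "T_of Bs A = 0"
  shows "kernel_outside Bs A = {\<lambda>_. 0 :: 'a::{finite,ab_group_add}}"
proof -
  have "finite (kernel_outside Bs A :: (nat \<times> nat \<Rightarrow> 'a) set)"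
    using assms(1) by (rule finite_kernel_outside)
  moreover have "card (kernel_outside Bs A :: (nat \<times> nat \<Rightarrow> 'a) set) \<le> 1"
    using card_kernel_outside_le[OF assms(1), of A, where 'a='a] assms(2) by simp
  ultimately have "\<forall>u\<in>kernel_outside Bs A. \<forall>u'\<in>kernel_outside Bs A. u = (u' :: nat \<times> nat \<Rightarrow> 'a)"
    using card_le_Suc0_iff_eq by auto
  then show ?thesis
    using zero_in_kernel_outside[of Bs A, where 'a='a] by blast
qed

lemma T_of_le_card_info_coords:
  assumes "\<forall>B\<in>set Bs. finite B"
  shows "T_of Bs A \<le> card (info_coords Bs)"
  unfolding T_of_eq_sum card_info_coords[OF assms]
  using assms by (intro sum_mono diff_le_mono card_mono) auto

lemma T_of_le_T_max:
  "A \<subseteq> {1..n} \<Longrightarrow> card A = n - k \<Longrightarrow> T_of Bs A \<le> T_max n k Bs"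
  unfolding T_max_def by (rule Max_ge) auto

lemma T_max_le_card_info_coords:
  assumes "\<forall>B\<in>set Bs. finite B"
  shows "T_max n k Bs \<le> card (info_coords Bs)"
  unfolding T_max_def using T_of_le_card_info_coords[OF assms(1)]
  by (subst Max_le_iff) (auto intro!: exI[of _ "{1..n - k}"])

lemma card_kernel_outside_le_T_max:
  assumes "\<forall>B\<in>set Bs. finite B" and "A \<subseteq> {1..n}" and "card A = n - k"
  shows "card (kernel_outside Bs A :: (nat \<times> nat \<Rightarrow> 'a::{finite,field}) set)
    \<le> CARD('a) ^ T_max n k Bs"
proof -
  have "card (kernel_outside Bs A :: (nat \<times> nat \<Rightarrow> 'a) set) \<le> CARD('a) ^ T_of Bs A"
    using card_kernel_outside_le[OF assms(1)] .
  also have "\<dots> \<le> CARD('a) ^ T_max n k Bs"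
    using T_of_le_T_max[OF assms(2,3)] two_le_card_UNIV_field[where 'a='a]
    by (intro power_increasing) auto
  finally show ?thesis .
qed

lemma exists_generic_encoder:
  fixes Bs :: "nat set list" and n k M :: nat
  assumes fin: "\<forall>B\<in>set Bs. finite B" and "k \<le> n"
    and dim: "M + T_max n k Bs \<le> card (info_coords Bs)"
    and field_size: "(n choose k) * T_max n k Bs * M < CARD('a::{finite,field})"
  shows "\<exists>w :: nat \<Rightarrow> nat \<times> nat \<Rightarrow> 'a. (\<forall>m<M. w m \<in> supported_on (info_coords Bs)) \<and>
    (\<forall>A. A \<subseteq> {1..n} \<and> card A = n - k \<longrightarrow>
      (\<forall>c. lincomb M c w \<in> kernel_outside Bs A \<longrightarrow> (\<forall>m<M. c m = 0)))"
proof (cases "M = 0")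
  case False
  define As where "As = {A. A \<subseteq> {1..n} \<and> card A = n - k}"
  define UU where "UU = (kernel_outside Bs ` As :: (nat \<times> nat \<Rightarrow> 'a) set set)"
  have U_bound: "finite U \<and> card U \<le> CARD('a) ^ T_max n k Bs" if "U \<in> UU" for U
    using \<open>U \<in> UU\<close> finite_kernel_outside[OF fin] card_kernel_outside_le_T_max[OF fin]
    by (auto simp: UU_def As_def)
  have "card UU < CARD('a)"
  proof (cases "T_max n k Bs = 0")
    case True
    \<comment> \<open>the hypothesis on the field size is void here, but every kernel is trivial\<close>
    have "UU \<subseteq> {{\<lambda>_. 0}}"
    proof
      fix U assume "U \<in> UU"
      then obtain A where "A \<subseteq> {1..n}" "card A = n - k" and U: "U = kernel_outside Bs A"
        by (auto simp: UU_def As_def)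
      then have "T_of Bs A = 0"
        using T_of_le_T_max[of A n k Bs] True by simp
      then show "U \<in> {{\<lambda>_. 0}}"
        using kernel_outside_eq_zero[OF fin] U by simp
    qed
    then have "card UU \<le> card {{\<lambda>_::nat \<times> nat. 0::'a}}"
      by (intro card_mono) auto
    then show ?thesis
      using two_le_card_UNIV_field[where 'a='a] by simp
  next
    case False
    have "card UU \<le> n choose k"
      unfolding UU_def using card_image_le[of As] n_subsets[of "{1..n}" "n - k"]
        binomial_symmetric[OF \<open>k \<le> n\<close>] by (simp add: As_def)
    also have "\<dots> \<le> (n choose k) * T_max n k Bs * M"
      using False \<open>M \<noteq> 0\<close> by simp
    finally show ?thesis
      using field_size by simp
  qed
  moreover have "finite UU"
    by (simp add: UU_def As_def)
  moreover have "\<And>U u a. U \<in> UU \<Longrightarrow> u \<in> U \<Longrightarrow> (\<lambda>z. a * u z) \<in> U"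
    unfolding UU_def using kernel_outside_scale by blast
  ultimately obtain w where "\<forall>m<M. w m \<in> supported_on (info_coords Bs)"
    and "\<forall>U\<in>UU. \<forall>c. lincomb M c w \<in> U \<longrightarrow> (\<forall>m<M. c m = 0)"
    using exists_lincomb_avoiding[OF finite_info_coords[OF fin] _ _ U_bound _ dim] by blast
  then show ?thesis
    by (auto simp: UU_def As_def)
qed simp

section \<open>Block designs\<close>

definition node_blocks :: "nat set list \<Rightarrow> nat \<Rightarrow> nat set" where
  "node_blocks Bs i = {b. b < length Bs \<and> i \<in> Bs ! b}"

lemma bibd_nth:
  "bibd lam r n Bs \<Longrightarrow> b < length Bs \<Longrightarrow> Bs ! b \<subseteq> {1..n} \<and> card (Bs ! b) = r"
  by (simp add: bibd_def)

lemma bibd_finite_blocks: "bibd lam r n Bs \<Longrightarrow> \<forall>B\<in>set Bs. finite B"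
  by (meson bibd_def finite_atLeastAtMost finite_subset)

lemma card_node_blocks_Int:
  assumes "bibd lam r n Bs" and "i \<in> {1..n}" and "j \<in> {1..n}" and "i \<noteq> j"
  shows "card (node_blocks Bs i \<inter> node_blocks Bs j) = lam"
proof -
  have "card (node_blocks Bs i \<inter> node_blocks Bs j) = length (filter (\<lambda>B. i \<in> B \<and> j \<in> B) Bs)"
    unfolding length_filter_conv_card node_blocks_def by (rule arg_cong[where f = card]) auto
  then show ?thesis
    using assms by (simp add: bibd_def)
qed

lemma sum_card_incidences:
  assumes "finite X" and "finite Y"
  shows "(\<Sum>x\<in>X. card {y\<in>Y. R x y}) = (\<Sum>y\<in>Y. card {x\<in>X. R x y})"
  using sum.swap_restrict[OF assms, of "\<lambda>_ _. 1::nat" R] by simp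

lemma bibd_replication:
  assumes bibd: "bibd lam r n Bs" and i: "i \<in> {1..n}"
  shows "card (node_blocks Bs i) * (r - 1) = lam * (n - 1)"
proof -
  have "card (node_blocks Bs i) * (r - 1)
      = (\<Sum>b\<in>node_blocks Bs i. card {y\<in>{1..n} - {i}. y \<in> Bs ! b})"
  proof -
    have "card {y\<in>{1..n} - {i}. y \<in> Bs ! b} = r - 1" if "b \<in> node_blocks Bs i" for b
    proof -
      have "{y\<in>{1..n} - {i}. y \<in> Bs ! b} = Bs ! b - {i}"
        using bibd_nth[OF bibd, of b] that by (auto simp: node_blocks_def)
      then show ?thesis
        using bibd_nth[OF bibd, of b] that by (auto simp: node_blocks_def finite_subset)
    qed
    then show ?thesis
      by simp
  qed
  also have "\<dots> = (\<Sum>y\<in>{1..n} - {i}. card {b\<in>node_blocks Bs i. y \<in> Bs ! b})"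
    by (rule sum_card_incidences) (simp_all add: node_blocks_def)
  also have "\<dots> = (\<Sum>y\<in>{1..n} - {i}. lam)"
  proof (rule sum.cong[OF refl])
    fix y assume "y \<in> {1..n} - {i}"
    moreover have "{b\<in>node_blocks Bs i. y \<in> Bs ! b} = node_blocks Bs i \<inter> node_blocks Bs y"
      by (auto simp: node_blocks_def)
    ultimately show "card {b\<in>node_blocks Bs i. y \<in> Bs ! b} = lam"
      using card_node_blocks_Int[OF bibd i] by simp
  qed
  finally show ?thesis
    using i by simp
qed

lemma bibd_card_node_blocks:
  assumes "bibd lam r n Bs" and "2 \<le> r" and "i \<in> {1..n}"
  shows "card (node_blocks Bs i) = lam * (n - 1) div (r - 1)"
proof -
  have "r - 1 \<noteq> 0"
    using assms(2) by simp
  then show ?thesis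
    using bibd_replication[OF assms(1,3)] by (metis nonzero_mult_div_cancel_right)
qed

lemma bibd_replication_dvd:
  assumes "bibd lam r n Bs" and "1 \<le> n"
  shows "(r - 1) dvd lam * (n - 1)"
  using bibd_replication[OF assms(1), of 1] assms(2)
  by (metis atLeastAtMost_iff dvd_triv_right order_refl)

lemma bibd_card_info_coords:
  assumes bibd: "bibd lam r n Bs"
  shows "card (info_coords Bs) * r = lam * n * (n - 1)"
proof -
  have "length Bs * r = (\<Sum>b<length Bs. card {y\<in>{1..n}. y \<in> Bs ! b})"
  proof -
    have "{y\<in>{1..n}. y \<in> Bs ! b} = Bs ! b" if "b < length Bs" for b
      using bibd_nth[OF bibd that] by auto
    then show ?thesis
      using bibd_nth[OF bibd] by simp
  qed
  also have "\<dots> = (\<Sum>y\<in>{1..n}. card (node_blocks Bs y))"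
    by (subst sum_card_incidences) (simp_all add: node_blocks_def)
  finally have "length Bs * r * (r - 1) = (\<Sum>y\<in>{1..n}. card (node_blocks Bs y) * (r - 1))"
    by (simp add: sum_distrib_right)
  also have "\<dots> = lam * n * (n - 1)"
    using bibd_replication[OF bibd] by simp
  finally show ?thesis
    using bibd_finite_blocks[OF bibd] bibd_nth[OF bibd]
    by (simp add: card_info_coords mult.commute mult.left_commute)
qed

section \<open>The design code\<close>

lemma finite_node_blocks: "finite (node_blocks Bs i)"
  by (simp add: node_blocks_def)

definition block_of :: "nat set list \<Rightarrow> nat \<Rightarrow> nat \<Rightarrow> nat" where
  "block_of Bs i t = sorted_list_of_set (node_blocks Bs i) ! t"

lemma bij_betw_block_of:
  "bij_betw (block_of Bs i) {..<card (node_blocks Bs i)} (node_blocks Bs i)"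
  unfolding block_of_def by (rule bij_betw_nth) (simp_all add: finite_node_blocks)

lemma block_of_surj:
  assumes "b \<in> node_blocks Bs i"
  obtains t where "t < card (node_blocks Bs i)" and "block_of Bs i t = b"
proof -
  have "b \<in> block_of Bs i ` {..<card (node_blocks Bs i)}"
    using bij_betw_block_of[of Bs i] assms by (simp add: bij_betw_def)
  then show ?thesis
    using that by auto
qed

text \<open>The \<open>t\<close>-th symbol of node \<open>i\<close> is its symbol in the \<open>t\<close>-th block through \<open>i\<close>, for the
  information vector \<open>lincomb M x w\<close> of the message \<open>x\<close>.\<close>
definition design_code ::
  "nat set list \<Rightarrow> (nat \<Rightarrow> nat \<times> nat \<Rightarrow> 'a::comm_monoid_add) \<Rightarrow> nat \<Rightarrow> nat \<Rightarrow> nat \<Rightarrow> 'a" where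
  "design_code Bs w i t m = block_symbol Bs (block_of Bs i t) i (w m)"

lemma content_design_code:
  fixes w :: "nat \<Rightarrow> nat \<times> nat \<Rightarrow> 'a::field"
  shows "content M (design_code Bs w) i x t = block_symbol Bs (block_of Bs i t) i (lincomb M x w)"
  by (simp add: content_def design_code_def block_symbol_def lincomb_def
      parity_symbol_lincomb[unfolded lincomb_def])

lemma bij_betw_card_preimage:
  assumes "bij_betw f A B"
  shows "card {x\<in>A. f x \<in> C} = card (B \<inter> C)"
proof -
  have "bij_betw f {x\<in>A. f x \<in> C} (B \<inter> C)"
    using assms by (rule bij_betw_subset) (use assms in \<open>auto simp: bij_betw_def\<close>)
  then show ?thesis
    by (rule bij_betw_same_card)
qed

lemma block_of_in_node_blocks:
  "t < card (node_blocks Bs i) \<Longrightarrow> block_of Bs i t \<in> node_blocks Bs i"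
  using bij_betw_block_of[of Bs i] by (auto simp: bij_betw_def)

lemma design_code_repair_symbol:
  fixes w :: "nat \<Rightarrow> nat \<times> nat \<Rightarrow> 'a::field"
  assumes bibd: "bibd lam r n Bs" and rep: "\<And>i. i \<in> {1..n} \<Longrightarrow> card (node_blocks Bs i) = \<alpha>"
    and j: "j \<in> {1..n}" and "t < \<alpha>"
    and agree: "\<And>i t'. i \<in> {1..n} - {j} \<Longrightarrow> t' < \<alpha> \<Longrightarrow> block_of Bs i t' = block_of Bs j t \<Longrightarrow>
      content M (design_code Bs w) i x t' = content M (design_code Bs w) i y t'"
  shows "content M (design_code Bs w) j x t = content M (design_code Bs w) j y t"
proof -
  define b where "b = block_of Bs j t"
  have b: "b \<in> node_blocks Bs j"
    unfolding b_def using block_of_in_node_blocks rep[OF j] \<open>t < \<alpha>\<close> by simp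
  have "parity_symbol (Bs ! b) j (\<lambda>s. lincomb M x w (b, s))
      = parity_symbol (Bs ! b) j (\<lambda>s. lincomb M y w (b, s))"
  proof (rule parity_symbol_eq_from_others)
    show "finite (Bs ! b)" and "j \<in> Bs ! b"
      using b bibd_finite_blocks[OF bibd] by (auto simp: node_blocks_def)
    fix i assume "i \<in> Bs ! b - {j}"
    then have i: "i \<in> {1..n} - {j}" and "b \<in> node_blocks Bs i"
      using b bibd_nth[OF bibd, of b] by (auto simp: node_blocks_def)
    then obtain t' where "t' < \<alpha>" and t': "block_of Bs i t' = b"
      using block_of_surj rep by (metis DiffD1)
    then show "parity_symbol (Bs ! b) i (\<lambda>s. lincomb M x w (b, s))
        = parity_symbol (Bs ! b) i (\<lambda>s. lincomb M y w (b, s))"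
      using agree[OF i] by (simp add: b_def content_design_code block_symbol_def)
  qed
  then show ?thesis
    by (simp add: content_design_code block_symbol_def b_def)
qed

lemma design_code_uncoded_repair:
  fixes w :: "nat \<Rightarrow> nat \<times> nat \<Rightarrow> 'a::field"
  assumes bibd: "bibd lam r n Bs" and rep: "\<And>i. i \<in> {1..n} \<Longrightarrow> card (node_blocks Bs i) = \<alpha>"
  shows "uncoded_repair n \<alpha> lam M (design_code Bs w)"
  unfolding uncoded_repair_def
proof
  fix j assume j: "j \<in> {1..n}"
  define S where "S i = {t\<in>{..<\<alpha>}. block_of Bs i t \<in> node_blocks Bs j}" for i
  show "\<exists>S. (\<forall>i\<in>{1..n} - {j}. S i \<subseteq> {..<\<alpha>} \<and> card (S i) = lam) \<and>
    (\<forall>x y. (\<forall>i\<in>{1..n} - {j}. \<forall>t\<in>S i.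
        content M (design_code Bs w) i x t = content M (design_code Bs w) i y t) \<longrightarrow>
      (\<forall>t<\<alpha>. content M (design_code Bs w) j x t = content M (design_code Bs w) j y t))"
  proof (intro exI[of _ S] conjI ballI allI impI)
    fix i assume i: "i \<in> {1..n} - {j}"
    show "S i \<subseteq> {..<\<alpha>}"
      by (auto simp: S_def)
    show "card (S i) = lam"
      using bij_betw_card_preimage[OF bij_betw_block_of[of Bs i], of "node_blocks Bs j"]
        card_node_blocks_Int[OF bibd] i j rep
      by (simp add: S_def)
  next
    fix x y t
    assume "\<forall>i\<in>{1..n} - {j}. \<forall>t\<in>S i.
        content M (design_code Bs w) i x t = content M (design_code Bs w) i y t"
      and "t < \<alpha>"
    then show "content M (design_code Bs w) j x t = content M (design_code Bs w) j y t"
      using block_of_in_node_blocks[of t Bs j] rep[OF j]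
      by (intro design_code_repair_symbol[OF bibd rep j]) (auto simp: S_def)
  qed
qed

lemma uncoded_repair_imp_exact_repair:
  fixes G :: "nat \<Rightarrow> nat \<Rightarrow> nat \<Rightarrow> 'a::field"
  assumes "uncoded_repair n \<alpha> \<beta> M G" and j: "j \<in> {1..n}"
    and A: "A \<subseteq> {1..n} - {j}" and "card A = n - 1"
  shows "\<exists>H :: nat \<Rightarrow> nat \<Rightarrow> nat \<Rightarrow> 'a. \<forall>x y.
    (\<forall>i\<in>A. \<forall>l<\<beta>. (\<Sum>t<\<alpha>. H i l t * content M G i x t) = (\<Sum>t<\<alpha>. H i l t * content M G i y t))
    \<longrightarrow> (\<forall>t<\<alpha>. content M G j x t = content M G j y t)"
proof -
  have A_eq: "A = {1..n} - {j}"
    using A \<open>card A = n - 1\<close> j by (intro card_subset_eq) auto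
  have "\<exists>S. (\<forall>i\<in>{1..n} - {j}. S i \<subseteq> {..<\<alpha>} \<and> card (S i) = \<beta>) \<and>
    (\<forall>x y. (\<forall>i\<in>{1..n} - {j}. \<forall>t\<in>S i. content M G i x t = content M G i y t) \<longrightarrow>
      (\<forall>t<\<alpha>. content M G j x t = content M G j y t))"
    using assms(1) j unfolding uncoded_repair_def by (rule bspec)
  then obtain S where S: "\<forall>i\<in>{1..n} - {j}. S i \<subseteq> {..<\<alpha>} \<and> card (S i) = \<beta>"
    and repair: "\<forall>x y. (\<forall>i\<in>{1..n} - {j}. \<forall>t\<in>S i. content M G i x t = content M G i y t) \<longrightarrow>
      (\<forall>t<\<alpha>. content M G j x t = content M G j y t)"
    by (elim exE conjE)
  define H where "H i l t = (of_bool (t = sorted_list_of_set (S i) ! l) :: 'a)" for i l t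
  show ?thesis
  proof (intro exI[of _ H] allI impI)
    fix x y t0
    assume sent: "\<forall>i\<in>A. \<forall>l<\<beta>.
      (\<Sum>t<\<alpha>. H i l t * content M G i x t) = (\<Sum>t<\<alpha>. H i l t * content M G i y t)"
      and "t0 < \<alpha>"
    have "\<forall>i\<in>{1..n} - {j}. \<forall>t\<in>S i. content M G i x t = content M G i y t"
    proof (intro ballI)
      fix i t assume i: "i \<in> {1..n} - {j}" and t: "t \<in> S i"
      have "S i \<subseteq> {..<\<alpha>}" and "card (S i) = \<beta>"
        using S i by auto
      then have "finite (S i)" and "t < \<alpha>"
        using t finite_subset by auto
      then have "t \<in> set (sorted_list_of_set (S i))"
        using t by simp
      then obtain l where "l < length (sorted_list_of_set (S i))"
        and l: "sorted_list_of_set (S i) ! l = t"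
        unfolding in_set_conv_nth by blast
      then have "l < \<beta>"
        using \<open>card (S i) = \<beta>\<close> by simp
      with l show "content M G i x t = content M G i y t"
        using sent[rule_format, of i l] i A_eq \<open>t < \<alpha>\<close> by (simp add: H_def)
    qed
    then show "content M G j x t0 = content M G j y t0"
      using repair \<open>t0 < \<alpha>\<close> by blast
  qed
qed

lemma design_code_reconstruct:
  fixes w :: "nat \<Rightarrow> nat \<times> nat \<Rightarrow> 'a::field"
  assumes bibd: "bibd lam r n Bs" and rep: "\<And>i. i \<in> {1..n} \<Longrightarrow> card (node_blocks Bs i) = \<alpha>"
    and w_supp: "\<And>m. m < M \<Longrightarrow> w m \<in> supported_on (info_coords Bs)"
    and avoid: "\<And>c. lincomb M c w \<in> kernel_outside Bs ({1..n} - K) \<Longrightarrow> \<forall>m<M. c m = 0"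
    and K: "K \<subseteq> {1..n}"
    and agree: "\<forall>i\<in>K. \<forall>t<\<alpha>. content M (design_code Bs w) i x t = content M (design_code Bs w) i y t"
  shows "\<forall>m<M. x m = y m"
proof -
  have "lincomb M (\<lambda>m. x m - y m) w \<in> kernel_outside Bs ({1..n} - K)"
    unfolding kernel_outside_def
  proof (intro CollectI conjI allI impI ballI lincomb_in_supported_on w_supp)
    fix b i assume b: "b < length Bs" and i: "i \<in> Bs ! b - ({1..n} - K)"
    then have "i \<in> K" and "b \<in> node_blocks Bs i"
      using bibd_nth[OF bibd b] by (auto simp: node_blocks_def)
    obtain t where "t < card (node_blocks Bs i)" and "block_of Bs i t = b"
      by (rule block_of_surj[OF \<open>b \<in> node_blocks Bs i\<close>])
    moreover have "card (node_blocks Bs i) = \<alpha>"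
      using rep K \<open>i \<in> K\<close> by blast
    ultimately have "content M (design_code Bs w) i x t = content M (design_code Bs w) i y t"
      using agree \<open>i \<in> K\<close> by simp
    then show "block_symbol Bs b i (lincomb M (\<lambda>m. x m - y m) w) = 0"
      using \<open>block_of Bs i t = b\<close>
      by (simp add: content_design_code lincomb_diff block_symbol_def parity_symbol_diff)
  qed
  then have "\<forall>m<M. x m - y m = 0"
    using avoid[of "\<lambda>m. x m - y m"] by blast
  then show ?thesis
    by simp
qed

lemma design_code_lin_regen_code:
  fixes w :: "nat \<Rightarrow> nat \<times> nat \<Rightarrow> 'a::field"
  assumes bibd: "bibd lam r n Bs" and rep: "\<And>i. i \<in> {1..n} \<Longrightarrow> card (node_blocks Bs i) = \<alpha>"
    and w_supp: "\<And>m. m < M \<Longrightarrow> w m \<in> supported_on (info_coords Bs)"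
    and avoid: "\<And>A c. A \<subseteq> {1..n} \<Longrightarrow> card A = n - k \<Longrightarrow>
      lincomb M c w \<in> kernel_outside Bs A \<Longrightarrow> \<forall>m<M. c m = 0"
  shows "lin_regen_code n k (n - 1) \<alpha> lam M (design_code Bs w)"
  unfolding lin_regen_code_def
proof (intro conjI allI impI ballI)
  fix K x y m
  assume K: "K \<subseteq> {1..n} \<and> card K = k"
    and agree: "\<forall>i\<in>K. \<forall>t<\<alpha>. content M (design_code Bs w) i x t = content M (design_code Bs w) i y t"
    and "m < M"
  have "finite K"
    using K finite_subset by blast
  then have "card ({1..n} - K) = n - k"
    using K by (simp add: card_Diff_subset)
  then show "x m = y m"
    using design_code_reconstruct[OF bibd rep w_supp _ _ agree] avoid K \<open>m < M\<close> by blast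
next
  fix j A assume "j \<in> {1..n}" and "A \<subseteq> {1..n} - {j} \<and> card A = n - 1"
  then show "\<exists>H. \<forall>x y. (\<forall>i\<in>A. \<forall>l<lam.
      (\<Sum>t<\<alpha>. H i l t * content M (design_code Bs w) i x t) =
      (\<Sum>t<\<alpha>. H i l t * content M (design_code Bs w) i y t)) \<longrightarrow>
      (\<forall>t<\<alpha>. content M (design_code Bs w) j x t = content M (design_code Bs w) j y t)"
    using uncoded_repair_imp_exact_repair[OF design_code_uncoded_repair[OF bibd rep]] by blast
qed

lemma exists_design_code:
  assumes bibd: "bibd lam r n Bs" and "2 \<le> r" and "k \<le> n"
    and field_size: "(n choose k) * T_max n k Bs * (card (info_coords Bs) - T_max n k Bs)
      < CARD('a::{finite,field})"
  defines "\<alpha> \<equiv> lam * (n - 1) div (r - 1)" and "M \<equiv> card (info_coords Bs) - T_max n k Bs"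
  shows "\<exists>w :: nat \<Rightarrow> nat \<times> nat \<Rightarrow> 'a. lin_regen_code n k (n - 1) \<alpha> lam M (design_code Bs w) \<and>
    uncoded_repair n \<alpha> lam M (design_code Bs w)"
proof -
  have fin: "\<forall>B\<in>set Bs. finite B"
    using bibd by (rule bibd_finite_blocks)
  have rep: "\<And>i. i \<in> {1..n} \<Longrightarrow> card (node_blocks Bs i) = \<alpha>"
    unfolding \<alpha>_def using bibd_card_node_blocks[OF bibd \<open>2 \<le> r\<close>] .
  have "M + T_max n k Bs \<le> card (info_coords Bs)"
    using T_max_le_card_info_coords[OF fin] by (simp add: M_def)
  then obtain w :: "nat \<Rightarrow> nat \<times> nat \<Rightarrow> 'a" where
    "\<forall>m<M. w m \<in> supported_on (info_coords Bs)" and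
    "\<forall>A. A \<subseteq> {1..n} \<and> card A = n - k \<longrightarrow>
      (\<forall>c. lincomb M c w \<in> kernel_outside Bs A \<longrightarrow> (\<forall>m<M. c m = 0))"
    using exists_generic_encoder[OF fin \<open>k \<le> n\<close> _ field_size[folded M_def]] by blast
  then have "lin_regen_code n k (n - 1) \<alpha> lam M (design_code Bs w)"
    by (intro design_code_lin_regen_code[OF bibd rep]) auto
  then show ?thesis
    using design_code_uncoded_repair[OF bibd rep, of M w] by blast
qed

theorem mainTheorem3:
  fixes n r lam k :: nat and Bs :: "nat set list"
  assumes "n \<ge> 2" and "2 \<le> r" and "r \<le> n" and "lam \<ge> 1"
    and "1 \<le> k" and "k \<le> n - 1"
    and "bibd lam r n Bs"
    and "real (card (UNIV :: 'a::{finite,field} set)) >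
           real (n choose k) * real (T_max n k Bs)
             * (real (lam * n * (n - 1)) / real r - real (T_max n k Bs))"
  shows "\<exists>(\<alpha>::nat) (M::nat) (G :: nat \<Rightarrow> nat \<Rightarrow> nat \<Rightarrow> 'a).
           real \<alpha> = real (lam * (n - 1)) / real (r - 1) \<and>
           real M = real (lam * n * (n - 1)) / real r - real (T_max n k Bs) \<and>
           lin_regen_code n k (n - 1) \<alpha> lam M G \<and>
           uncoded_repair n \<alpha> lam M G"
proof -
  note bibd = \<open>bibd lam r n Bs\<close>
  define \<alpha> where "\<alpha> = lam * (n - 1) div (r - 1)"
  define M where "M = card (info_coords Bs) - T_max n k Bs"
  have real_\<alpha>: "real \<alpha> = real (lam * (n - 1)) / real (r - 1)"
    unfolding \<alpha>_def using bibd_replication_dvd[OF bibd] \<open>n \<ge> 2\<close> by (simp add: real_of_nat_div)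
  have real_M: "real M = real (lam * n * (n - 1)) / real r - real (T_max n k Bs)"
    using T_max_le_card_info_coords[OF bibd_finite_blocks[OF bibd]] bibd_card_info_coords[OF bibd]
      \<open>2 \<le> r\<close> by (simp add: M_def of_nat_diff field_simps flip: of_nat_mult)
  have "real ((n choose k) * T_max n k Bs * M) < real CARD('a)"
    using assms(8) by (simp add: real_M)
  then have field_size: "(n choose k) * T_max n k Bs * M < CARD('a)"
    by (simp only: of_nat_less_iff)
  have "k \<le> n"
    using \<open>k \<le> n - 1\<close> by simp
  obtain w :: "nat \<Rightarrow> nat \<times> nat \<Rightarrow> 'a" where
    "lin_regen_code n k (n - 1) \<alpha> lam M (design_code Bs w)"
    and "uncoded_repair n \<alpha> lam M (design_code Bs w)"
    using exists_design_code[OF bibd \<open>2 \<le> r\<close> \<open>k \<le> n\<close> field_size[unfolded M_def]]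
    unfolding \<alpha>_def M_def by blast
  then show ?thesis
    using real_\<alpha> real_M by blast
qed

end
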